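(* Let $G$ be a non-cyclic finite group of order $n$ and let $q$ be the smallest prime divisor of $n$. Then $$\psi(G)\leq \frac{(n-1)n}{q}+1<\frac{n^2}{q}.$$
   Context: For a finite group $G$, $\psi(G)=\sum_{g\in G} o(g)$ denotes the sum of the orders of all elements of $G$. *)

theory Defs
  imports "HOL-Algebra.Algebra" "HOL-Computational_Algebra.Primes"
begin

definition psi :: "('a, 'b) monoid_scheme \<Rightarrow> nat" where
  "psi G = (\<Sum>g\<in>carrier G. group.ord G g)"

end

theory Submission
  imports Defs
begin

text \<open>In a non-cyclic group every element order is a proper divisor of \<open>n = |G|\<close>, so the
  cofactor \<open>n / o(g)\<close> is a nontrivial divisor of \<open>n\<close> and hence at least the least prime
  divisor \<open>q\<close>. Thus \<open>o(g) \<le> n / q\<close> for all \<open>g\<close>, and \<open>o(1) = 1\<close> gives the first bound. The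
  second reduces to \<open>q < n\<close>, which holds since an element \<open>g \<noteq> 1\<close> has \<open>2 \<le> o(g) \<le> n / q\<close>.\<close>

lemma least_prime_divisor_mult_proper_divisor_le:
  fixes d n q :: nat
  assumes "d dvd n" "d \<noteq> n" "0 < n"
    and "\<forall>p. Factorial_Ring.prime p \<and> p dvd n \<longrightarrow> q \<le> p"
  shows "q * d \<le> n"
proof -
  obtain k where k: "n = d * k" using assms(1) by blast
  with assms(2,3) have "k \<noteq> 0" "k \<noteq> 1" by auto
  then obtain p where p: "Factorial_Ring.prime p" "p dvd k" using prime_factor_nat by blast
  with k assms(4) have "q \<le> p" by simp
  also have "p \<le> k" using p \<open>k \<noteq> 0\<close> dvd_imp_le by blast
  finally show ?thesis using k by simp
qed

lemma (in group) cyclic_group_if_ord_eq_order: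
  assumes "finite (carrier G)" "g \<in> carrier G" "ord g = order G"
  shows "cyclic_group G"
proof -
  have "generate G {g} \<subseteq> carrier G"
    using assms(2) generate_incl by blast
  moreover have "card (generate G {g}) = card (carrier G)"
    using generate_pow_card[OF assms(2)] assms(3) by (simp add: order_def)
  ultimately have "generate G {g} = carrier G"
    using assms(1) by (metis card_subset_eq)
  then have "subgroup_generated G {g} = G"
    unfolding subgroup_generated_def using assms(2) by simp
  then show ?thesis unfolding cyclic_group_def using assms(2) by blast
qed

lemma (in group) least_prime_divisor_mult_ord_le_order:
  assumes "finite (carrier G)" "\<not> cyclic_group G" "g \<in> carrier G"
    and "\<forall>p. Factorial_Ring.prime p \<and> p dvd order G \<longrightarrow> q \<le> p"
  shows "q * ord g \<le> order G"
proof (rule least_prime_divisor_mult_proper_divisor_le)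
  show "ord g dvd order G" using ord_dvd_group_order[OF assms(3)] .
  show "ord g \<noteq> order G" using cyclic_group_if_ord_eq_order assms(1-3) by blast
  show "0 < order G" using assms(1) order_gt_0_iff_finite by blast
qed (use assms(4) in blast)

lemma (in group) psi_le_if_ord_le:
  assumes "finite (carrier G)" "\<forall>g\<in>carrier G. real (ord g) \<le> m"
  shows "real (psi G) \<le> 1 + real (order G - 1) * m"
proof -
  have "real (psi G) = 1 + (\<Sum>g\<in>carrier G - {\<one>}. real (ord g))"
    unfolding psi_def using sum.remove[OF assms(1) one_closed, of ord] by (simp add: ord_eq_1)
  also have "\<dots> \<le> 1 + (\<Sum>g\<in>carrier G - {\<one>}. m)"
    using assms(2) by (intro add_left_mono sum_mono) auto
  also have "\<dots> = 1 + real (order G - 1) * m"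
    using assms(1) by (simp add: card_Diff_singleton order_def)
  finally show ?thesis .
qed

lemma (in group) two_le_ord_if_ne_one:
  assumes "finite (carrier G)" "g \<in> carrier G" "g \<noteq> \<one>"
  shows "2 \<le> ord g"
  using ord_ge_1[OF assms(1,2)] ord_eq_1 assms(2,3) by fastforce

theorem proposition5:
  fixes G :: "('a, 'b) monoid_scheme" and q :: nat
  assumes "group G"
    and "finite (carrier G)"
    and "\<not> cyclic_group G"
    and "Factorial_Ring.prime q" and "q dvd order G"
    and "\<forall>p. Factorial_Ring.prime p \<and> p dvd order G \<longrightarrow> q \<le> p"
  shows "real (psi G) \<le> real ((order G - 1) * order G) / real q + 1
       \<and> real ((order G - 1) * order G) / real q + 1 < real (order G ^ 2) / real q"
proof -
  interpret group G by fact
  define n where "n = order G"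
  have "q > 0" using assms(4) prime_gt_0_nat by blast
  have ord_le: "q * ord g \<le> n" if "g \<in> carrier G" for g
    using least_prime_divisor_mult_ord_le_order assms(2,3,6) that n_def by blast
  have "real (ord g) \<le> real n / real q" if "g \<in> carrier G" for g
    using ord_le[OF that] \<open>q > 0\<close> by (simp add: le_divide_eq mult.commute flip: of_nat_mult)
  then have "real (psi G) \<le> 1 + real (n - 1) * (real n / real q)"
    using psi_le_if_ord_le assms(2) n_def by blast
  then have psi_le: "real (psi G) \<le> real ((n - 1) * n) / real q + 1"
    by simp
  obtain g where "g \<in> carrier G" "g \<noteq> \<one>\<^bsub>G\<^esub>"
    using assms(3) trivial_imp_cyclic_group trivial_group_def is_group by blast
  then have "q * 2 \<le> n"
    using ord_le two_le_ord_if_ne_one assms(2) by (meson le_trans mult_le_mono2)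
  then have "real ((n - 1) * n) + real q < real (n ^ 2)"
    using \<open>q > 0\<close> by (cases n) (auto simp: power2_eq_square)
  then have "real ((n - 1) * n) / real q + 1 < real (n ^ 2) / real q"
    using divide_strict_right_mono[of _ _ "real q"] \<open>q > 0\<close> by (fastforce simp: add_divide_distrib)
  with psi_le show ?thesis unfolding n_def by blast
qed

end
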